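(* Let $F$ be a measure on $\mathbb{Z}_+$ with $F(0)<\infty$ and $\sum_{k\ge1}F(k)/k<\infty$, and let $S$ be the associated measure ($S(\{\xi^0\})=F(0)$, $S(\{\xi^k\})=F(k)/k$ for $k\ge1$). The $S$-coalescent comes down from infinity if and only if $$S(\{\xi^0\})>0\quad\text{or}\quad\sum_{k\ge1}kS(\{\xi^k\})=\sum_{k\ge1}F(k)=\infty.$$
   Context: $\xi^0=(0,0,\dots)$, $\xi^k=(1/k,\dots,1/k,0,\dots)$ ($k$ entries $1/k$). The $S$-coalescent associated with $F$ is the exchangeable $\Xi$-coalescent with $\Xi=S$; concretely, when started from a partition with $b$ blocks, at rate $F(0)$ each pair of blocks merges (Kingman part), and at rate $F(k)$ ($k\ge1$) all current blocks are thrown independently and uniformly into $k$ boxes and all blocks in the same box merge. Let $N_t$ be its number of blocks at time $t$, started with $N_0=\infty$ (partition of $\mathbb{N}$ into singletons). The coalescent comes down from infinity if $N_t<\infty$ almost surely for every $t>0$. *)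

theory Defs
  imports Complex_Main "HOL-Library.FuncSet"
begin

text \<open>A measure F on Z_+ is given by its point masses F k (nonnegative reals).
 The associated measure S on the simplex has atoms S({xi^0}) = F 0 and
 S({xi^k}) = F k / k for k >= 1.\<close>

definition S_atom :: "(nat \<Rightarrow> real) \<Rightarrow> nat \<Rightarrow> real" where
  "S_atom F k = (if k = 0 then F 0 else F k / real k)"

definition occ :: "nat \<Rightarrow> nat \<Rightarrow> nat \<Rightarrow> real" where
  "occ b k j = real (card {f \<in> {..<b} \<rightarrow>\<^sub>E {..<k}. card (f ` {..<b}) = j}) / real k ^ b"

text \<open>Jump rate of the block-counting process from b blocks to j < b blocks:
 Kingman part (rate F 0 per pair) plus the k-box events at rate F k.\<close>
definition rate :: "(nat \<Rightarrow> real) \<Rightarrow> nat \<Rightarrow> nat \<Rightarrow> real" where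
  "rate F b j = (if j + 1 = b then F 0 * real (b choose 2) else 0)
               + (\<Sum>k. F (Suc k) * occ b (Suc k) j)"

definition genQ :: "(nat \<Rightarrow> real) \<Rightarrow> nat \<Rightarrow> nat \<Rightarrow> real" where
  "genQ F i j = (if j < i then rate F i j
                 else if j = i then - (\<Sum>l\<in>{1..<i}. rate F i l) else 0)"

text \<open>Powers of the generator restricted to the finite state space {1..n}
 (closed, since the number of blocks only decreases).\<close>
fun mpow :: "(nat \<Rightarrow> real) \<Rightarrow> nat \<Rightarrow> nat \<Rightarrow> nat \<Rightarrow> nat \<Rightarrow> real" where
  "mpow F n 0 i j = (if i = j then 1 else 0)"
| "mpow F n (Suc m) i j = (\<Sum>l\<in>{1..n}. mpow F n m i l * genQ F l j)"

text \<open>Transition probabilities P(N^{(n)}_t = j | N^{(n)}_0 = i) = exp(tQ)_{ij}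
 for the number of blocks of the coalescent restricted to {1..n}.\<close>
definition trans :: "(nat \<Rightarrow> real) \<Rightarrow> nat \<Rightarrow> real \<Rightarrow> nat \<Rightarrow> nat \<Rightarrow> real" where
  "trans F n t i j = (\<Sum>m. t ^ m / fact m * mpow F n m i j)"

text \<open>N_t = lim_n N^{(n)}_t (nondecreasing in n under the natural coupling), hence
 P(N_t \<le> M) = lim_n P(N^{(n)}_t \<le> M) and P(N_t < \<infinity>) = lim_M P(N_t \<le> M).
 The coalescent comes down from infinity iff this is 1 for every t > 0.\<close>
definition comes_down_from_infinity :: "(nat \<Rightarrow> real) \<Rightarrow> bool" where
  "comes_down_from_infinity F \<longleftrightarrow>
     (\<forall>t>0. ((\<lambda>M. lim (\<lambda>n. \<Sum>j\<in>{1..M}. trans F n t n j)) \<longlongrightarrow> 1) at_top)"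

end

theory Submission
  imports Defs
begin

text \<open>
  The number of blocks of the coalescent restricted to \<open>{1..n}\<close> is a pure-death chain with
  generator \<open>Q\<close>. Adding a large constant \<open>c\<close> to the diagonal makes \<open>Q + c I\<close> a nonnegative
  matrix with row sums \<open>c\<close>, and \<open>exp (t Q) = exp (- c t) exp (t (Q + c I))\<close> can then be estimated
  term by term in the power series. The rates into \<open>{1..M}\<close> decrease with the current number of
  blocks, so the probability of at most \<open>M\<close> blocks at time \<open>t\<close> decreases with the initial number
  \<open>n\<close> of blocks and has a limit as \<open>n \<rightarrow> \<infinity>\<close>.

  If \<open>F 0 = 0\<close> and \<open>\<Lambda> = (\<Sum>k\<ge>1. F k) < \<infinity>\<close>, every state is left at rate at most \<open>\<Lambda>\<close>, so with
  probability at least \<open>exp (- \<Lambda>)\<close> nothing happens before time \<open>1\<close>, whatever \<open>n\<close> is.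
  If \<open>\<Sum>k\<ge>1. F k = \<infinity>\<close>, every event with \<open>k \<le> M\<close> boxes leaves at most \<open>M\<close> blocks, so the chain
  stays above \<open>M\<close> up to time \<open>t\<close> with probability at most \<open>exp (- t * (\<Sum>k=1..M. F k))\<close>.
  If \<open>F 0 > 0\<close>, the pair mergers alone give a potential that decreases at unit rate above \<open>M\<close>,
  which bounds that probability by \<open>2 / (F 0 * M * t)\<close>.
\<close>

section \<open>Occupancy probabilities\<close>

lemma occ_nonneg: "0 \<le> occ b k j"
  by (simp add: occ_def)

lemma sum_occ_eq_card:
  assumes "finite J"
  shows "(\<Sum>j\<in>J. occ b k j) =
    real (card {f \<in> {..<b} \<rightarrow>\<^sub>E {..<k}. card (f ` {..<b}) \<in> J}) / real k ^ b"
proof -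
  let ?P = "{..<b} \<rightarrow>\<^sub>E {..<k}"
  have "{f \<in> ?P. card (f ` {..<b}) \<in> J} = (\<Union>j\<in>J. {f \<in> ?P. card (f ` {..<b}) = j})"
    by blast
  moreover have "card (\<Union>j\<in>J. {f \<in> ?P. card (f ` {..<b}) = j})
      = (\<Sum>j\<in>J. card {f \<in> ?P. card (f ` {..<b}) = j})"
    using assms finite_PiE[of "{..<b}" "\<lambda>_. {..<k}"] by (intro card_UN_disjoint) auto
  ultimately show ?thesis
    by (simp add: occ_def sum_divide_distrib)
qed

lemma sum_occ_le_1:
  assumes "finite J" "1 \<le> k"
  shows "(\<Sum>j\<in>J. occ b k j) \<le> 1"
proof -
  have "card {f \<in> {..<b} \<rightarrow>\<^sub>E {..<k}. card (f ` {..<b}) \<in> J} \<le> card ({..<b} \<rightarrow>\<^sub>E {..<k})"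
    by (intro card_mono finite_PiE) auto
  then have "real (card {f \<in> {..<b} \<rightarrow>\<^sub>E {..<k}. card (f ` {..<b}) \<in> J}) \<le> real k ^ b"
    by (simp add: card_PiE flip: of_nat_power)
  then show ?thesis
    using assms by (simp add: sum_occ_eq_card)
qed

lemma sum_occ_eq_1:
  assumes "finite J" "1 \<le> k" "1 \<le> b" "{1..k} \<subseteq> J"
  shows "(\<Sum>j\<in>J. occ b k j) = 1"
proof -
  have "card (f ` {..<b}) \<in> J" if f: "f \<in> {..<b} \<rightarrow>\<^sub>E {..<k}" for f
  proof -
    have "card (f ` {..<b}) \<le> k"
      using f card_mono[of "{..<k}" "f ` {..<b}"] by auto
    moreover have "1 \<le> card (f ` {..<b})"
      using assms(3) by (simp add: Suc_le_eq card_gt_0_iff lessThan_empty_iff)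
    ultimately show ?thesis
      using assms(4) by auto
  qed
  then have "{f \<in> {..<b} \<rightarrow>\<^sub>E {..<k}. card (f ` {..<b}) \<in> J} = {..<b} \<rightarrow>\<^sub>E {..<k}"
    by blast
  then show ?thesis
    using assms(2) by (simp add: sum_occ_eq_card[OF assms(1)] card_PiE)
qed

text \<open>Adding a ball can only increase the number of occupied boxes: a placement of
  \<open>Suc b\<close> balls is determined by the placement of the first \<open>b\<close> balls and the box of
  the last one.\<close>

lemma card_occupancy_Suc_le:
  assumes "1 \<le> b"
  shows "card {f \<in> {..<Suc b} \<rightarrow>\<^sub>E {..<k}. card (f ` {..<Suc b}) \<in> {1..M}}
       \<le> card {f \<in> {..<b} \<rightarrow>\<^sub>E {..<k}. card (f ` {..<b}) \<in> {1..M}} * k"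
proof -
  let ?A' = "{f \<in> {..<Suc b} \<rightarrow>\<^sub>E {..<k}. card (f ` {..<Suc b}) \<in> {1..M}}"
  let ?A = "{f \<in> {..<b} \<rightarrow>\<^sub>E {..<k}. card (f ` {..<b}) \<in> {1..M}}"
  let ?split = "\<lambda>f. (restrict f {..<b}, f b)"
  have "inj_on ?split ?A'"
  proof (rule inj_onI, rule extensionalityI[where A="{..<Suc b}"])
    fix f g assume "f \<in> ?A'" "g \<in> ?A'" and eq: "?split f = ?split g"
    then show "f \<in> extensional {..<Suc b}" "g \<in> extensional {..<Suc b}"
      by (simp_all add: PiE_iff)
    fix x assume x: "x \<in> {..<Suc b}"
    show "f x = g x"
    proof (cases "x = b")
      case False
      have "restrict f {..<b} x = restrict g {..<b} x"
        using eq by simp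
      then show ?thesis
        using x False by simp
    qed (use eq in simp)
  qed
  moreover have "?split ` ?A' \<subseteq> ?A \<times> {..<k}"
  proof (rule image_subsetI)
    fix f assume "f \<in> ?A'"
    then have fP: "f \<in> {..<Suc b} \<rightarrow>\<^sub>E {..<k}" and fM: "card (f ` {..<Suc b}) \<le> M"
      by auto
    have "card (f ` {..<b}) \<le> card (f ` {..<Suc b})"
      by (intro card_mono) auto
    moreover have "1 \<le> card (f ` {..<b})"
      using assms by (simp add: Suc_le_eq card_gt_0_iff lessThan_empty_iff)
    moreover have "restrict f {..<b} \<in> {..<b} \<rightarrow>\<^sub>E {..<k}"
      unfolding restrict_PiE_iff using PiE_mem[OF fP] by simp
    moreover have "f b < k"
      using PiE_mem[OF fP, of b] by simp
    ultimately show "?split f \<in> ?A \<times> {..<k}"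
      using fM by simp
  qed
  moreover have "finite (?A \<times> {..<k})"
    using finite_PiE[of "{..<b}" "\<lambda>_. {..<k}"] by auto
  ultimately have "card ?A' \<le> card (?A \<times> {..<k})"
    by (rule card_inj_on_le)
  then show ?thesis
    by (simp add: card_cartesian_product)
qed

lemma sum_occ_Suc_le:
  assumes "1 \<le> k" "1 \<le> b"
  shows "(\<Sum>j\<in>{1..M}. occ (Suc b) k j) \<le> (\<Sum>j\<in>{1..M}. occ b k j)"
proof -
  let ?A' = "{f \<in> {..<Suc b} \<rightarrow>\<^sub>E {..<k}. card (f ` {..<Suc b}) \<in> {1..M}}"
  let ?A = "{f \<in> {..<b} \<rightarrow>\<^sub>E {..<k}. card (f ` {..<b}) \<in> {1..M}}"
  have "real (card ?A') \<le> real (card ?A * k)"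
    using card_occupancy_Suc_le[OF assms(2), of k M] by (simp only: of_nat_le_iff)
  then have "real (card ?A') \<le> real (card ?A) * real k"
    by (simp only: of_nat_mult)
  then have "real (card ?A') / real k ^ Suc b \<le> real (card ?A) * real k / real k ^ Suc b"
    by (rule divide_right_mono) simp
  also have "\<dots> = real (card ?A) / real k ^ b"
    using assms(1) by simp
  finally show ?thesis
    by (simp only: sum_occ_eq_card[OF finite_atLeastAtMost])
qed

lemma card_PiE_collision_le:
  assumes "a < b" "a' < b" "a \<noteq> a'"
  shows "card {f \<in> {..<b} \<rightarrow>\<^sub>E {..<k}. f a = f a'} \<le> k ^ (b - 1)"
proof -
  let ?T = "{f \<in> {..<b} \<rightarrow>\<^sub>E {..<k}. f a = f a'}"
  let ?D = "{..<b} - {a'}"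
  have "inj_on (\<lambda>f. restrict f ?D) ?T"
  proof (rule inj_onI)
    fix f g assume f: "f \<in> ?T" and g: "g \<in> ?T" and eq: "restrict f ?D = restrict g ?D"
    have eqD: "f x = g x" if "x \<in> ?D" for x
      using fun_cong[OF eq, of x] that by simp
    show "f = g"
    proof
      fix x
      show "f x = g x"
      proof (cases "x = a'")
        case True
        have "f a' = f a" using f by simp
        also have "\<dots> = g a" using eqD[of a] assms by simp
        also have "\<dots> = g a'" using g by simp
        finally show ?thesis using True by simp
      next
        case False
        then show ?thesis
          using f g eqD by (cases "x < b") (auto simp: PiE_def extensional_def)
      qed
    qed
  qed
  moreover have "(\<lambda>f. restrict f ?D) ` ?T \<subseteq> ?D \<rightarrow>\<^sub>E {..<k}"
    by (rule image_subsetI) (auto simp: PiE_iff)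
  ultimately have "card ?T \<le> card (?D \<rightarrow>\<^sub>E {..<k})"
    by (rule card_inj_on_le) (simp add: finite_PiE)
  also have "\<dots> = k ^ (b - 1)"
    using assms by (simp add: card_PiE)
  finally show ?thesis .
qed

text \<open>If fewer than \<open>b\<close> boxes are occupied, two of the \<open>b\<close> balls collide, and each of the
  fewer than \<open>b\<^sup>2\<close> possible collisions has probability \<open>1 / k\<close>.\<close>

lemma occ_le_collision:
  assumes "1 \<le> k" "j < b"
  shows "occ b k j \<le> real b ^ 2 / real k"
proof -
  let ?S = "{f \<in> {..<b} \<rightarrow>\<^sub>E {..<k}. card (f ` {..<b}) = j}"
  let ?I = "{(a, a'). a < b \<and> a' < b \<and> a \<noteq> a'}"
  let ?T = "\<lambda>p. {f \<in> {..<b} \<rightarrow>\<^sub>E {..<k}. f (fst p) = f (snd p)}"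
  have cover: "?S \<subseteq> (\<Union>p\<in>?I. ?T p)"
  proof
    fix f assume f: "f \<in> ?S"
    have "\<not> inj_on f {..<b}"
    proof
      assume "inj_on f {..<b}"
      then have "card (f ` {..<b}) = b"
        by (simp add: card_image)
      then show False
        using f assms(2) by simp
    qed
    then obtain a a' where "a < b" "a' < b" "a \<noteq> a'" "f a = f a'"
      unfolding inj_on_def by auto
    then show "f \<in> (\<Union>p\<in>?I. ?T p)"
      using f by (intro UN_I[of "(a, a')"]) auto
  qed
  have finI: "finite ?I"
    by (rule finite_subset[of _ "{..<b} \<times> {..<b}"]) auto
  have "card ?I \<le> card ({..<b} \<times> {..<b})"
    by (rule card_mono) auto
  then have cardI: "card ?I \<le> b * b"
    by (simp add: card_cartesian_product)
  have "card ?S \<le> card (\<Union>p\<in>?I. ?T p)"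
    by (rule card_mono[OF finite_subset[OF _ finite_PiE[of "{..<b}" "\<lambda>_. {..<k}"]] cover]) auto
  also have "\<dots> \<le> (\<Sum>p\<in>?I. card (?T p))"
    by (rule card_UN_le[OF finI])
  also have "\<dots> \<le> (\<Sum>p\<in>?I. k ^ (b - 1))"
    by (rule sum_mono, rule card_PiE_collision_le) auto
  also have "\<dots> \<le> b * b * k ^ (b - 1)"
    using cardI by simp
  finally have "real (card ?S) \<le> real (b * b * k ^ (b - 1))"
    by (simp only: of_nat_le_iff)
  then have "occ b k j \<le> real b * real b * real k ^ (b - 1) / real k ^ b"
    unfolding occ_def by (intro divide_right_mono) auto
  also have "real k ^ b = real k ^ (b - 1) * real k"
    using assms(2) by (metis Suc_diff_1 gr0I less_nat_zero_code power_Suc2)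
  finally show ?thesis
    using assms(1) by (simp add: power2_eq_square)
qed

section \<open>Matrix exponentials on the states \<open>{1..N}\<close>\<close>

fun matpow :: "(nat \<Rightarrow> nat \<Rightarrow> real) \<Rightarrow> nat \<Rightarrow> nat \<Rightarrow> nat \<Rightarrow> nat \<Rightarrow> real" where
  "matpow A N 0 i j = (if i = j then 1 else 0)"
| "matpow A N (Suc m) i j = (\<Sum>l\<in>{1..N}. matpow A N m i l * A l j)"

definition matexp :: "(nat \<Rightarrow> nat \<Rightarrow> real) \<Rightarrow> nat \<Rightarrow> real \<Rightarrow> nat \<Rightarrow> nat \<Rightarrow> real" where
  "matexp A N t i j = (\<Sum>m. t ^ m / fact m * matpow A N m i j)"

lemma mpow_eq_matpow: "mpow F n m i j = matpow (genQ F) n m i j"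
  by (induction m arbitrary: j) auto

lemma trans_eq_matexp: "trans F N t = matexp (genQ F) N t"
  by (intro ext) (simp add: trans_def matexp_def mpow_eq_matpow)

lemma exp_series_sums: "(\<lambda>m. x ^ m / fact m) sums exp (x :: real)"
  using exp_converges[of x] by (simp add: divide_inverse mult.commute)

lemma matpow_eq_0_if_less:
  assumes "\<And>l j. l < j \<Longrightarrow> A l j = 0" "i < j"
  shows "matpow A N m i j = 0"
  using assms(2)
proof (induction m arbitrary: j)
  case (Suc m)
  have zero: "matpow A N m i l * A l j = 0" for l
    using Suc.IH[of l] assms(1)[of l j] Suc.prems by (cases "i < l") auto
  show ?case
    by (simp only: matpow.simps zero sum.neutral_const)
qed simp

lemma matpow_restrict:
  assumes "\<And>l j. l < j \<Longrightarrow> A l j = 0" "i \<le> n" "n \<le> N"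
  shows "matpow A n m i j = matpow A N m i j"
proof (induction m arbitrary: j)
  case (Suc m)
  have "(\<Sum>l\<in>{1..N}. matpow A N m i l * A l j) = (\<Sum>l\<in>{1..n}. matpow A N m i l * A l j)"
    by (rule sum.mono_neutral_right) (use assms matpow_eq_0_if_less[OF assms(1)] in auto)
  then show ?case
    using Suc.IH by simp
qed simp

lemma matexp_restrict:
  assumes "\<And>l j. l < j \<Longrightarrow> A l j = 0" "i \<le> n" "n \<le> N"
  shows "matexp A n t i j = matexp A N t i j"
  by (simp add: matexp_def matpow_restrict[OF assms])

lemma matexp_eq_0_if_less:
  assumes "\<And>l j. l < j \<Longrightarrow> A l j = 0" "i < j"
  shows "matexp A N t i j = 0"
  by (simp add: matexp_def matpow_eq_0_if_less[OF assms])

lemma abs_matpow_le: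
  assumes "j \<in> {1..N}"
  shows "\<bar>matpow A N m i j\<bar> \<le> (\<Sum>l\<in>{1..N}. \<Sum>j\<in>{1..N}. \<bar>A l j\<bar>) ^ m"
  using assms
proof (induction m arbitrary: j)
  case (Suc m)
  let ?S = "\<Sum>l\<in>{1..N}. \<Sum>j\<in>{1..N}. \<bar>A l j\<bar>"
  have "\<bar>matpow A N (Suc m) i j\<bar> \<le> (\<Sum>l\<in>{1..N}. \<bar>matpow A N m i l\<bar> * \<bar>A l j\<bar>)"
    unfolding matpow.simps abs_mult[symmetric] by (rule sum_abs)
  also have "\<dots> \<le> (\<Sum>l\<in>{1..N}. ?S ^ m * \<bar>A l j\<bar>)"
    by (intro sum_mono mult_right_mono Suc.IH) auto
  also have "\<dots> = ?S ^ m * (\<Sum>l\<in>{1..N}. \<bar>A l j\<bar>)"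
    by (simp add: sum_distrib_left)
  also have "\<dots> \<le> ?S ^ m * ?S"
  proof (intro mult_left_mono sum_mono)
    fix l assume "l \<in> {1..N}"
    show "\<bar>A l j\<bar> \<le> (\<Sum>j\<in>{1..N}. \<bar>A l j\<bar>)"
      by (rule member_le_sum) (use Suc.prems in auto)
  qed (simp add: sum_nonneg)
  finally show ?case
    by (simp add: mult.commute)
qed simp

lemma summable_matexp_series:
  assumes "j \<in> {1..N}"
  shows "summable (\<lambda>m. norm (t ^ m / fact m * matpow A N m i j))"
proof -
  let ?S = "\<Sum>l\<in>{1..N}. \<Sum>j\<in>{1..N}. \<bar>A l j\<bar>"
  have "summable (\<lambda>m. \<bar>t * ?S\<bar> ^ m / fact m)"
    using exp_series_sums by (rule sums_summable)
  then show ?thesis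
  proof (rule summable_comparison_test')
    fix m
    have "norm (t ^ m / fact m * matpow A N m i j) = \<bar>t\<bar> ^ m / fact m * \<bar>matpow A N m i j\<bar>"
      by (simp add: abs_mult power_abs)
    also have "\<dots> \<le> \<bar>t\<bar> ^ m / fact m * ?S ^ m"
      by (intro mult_left_mono abs_matpow_le assms) auto
    also have "\<dots> = \<bar>t * ?S\<bar> ^ m / fact m"
      by (simp add: abs_mult power_mult_distrib sum_nonneg)
    finally show "norm (norm (t ^ m / fact m * matpow A N m i j)) \<le> \<bar>t * ?S\<bar> ^ m / fact m"
      by simp
  qed
qed

lemma summable_matexp_weighted_series:
  assumes "J \<subseteq> {1..N}"
  shows "summable (\<lambda>m. t ^ m / fact m * (\<Sum>j\<in>J. matpow A N m i j * h j))"
proof -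
  have "summable (\<lambda>m. \<Sum>j\<in>J. t ^ m / fact m * matpow A N m i j * h j)"
    using assms by (intro summable_sum summable_mult2 summable_norm_cancel[OF summable_matexp_series]) auto
  then show ?thesis
    by (simp add: sum_distrib_left mult.assoc)
qed

lemma matexp_weighted_sum:
  assumes "J \<subseteq> {1..N}"
  shows "(\<Sum>j\<in>J. matexp A N t i j * h j) = (\<Sum>m. t ^ m / fact m * (\<Sum>j\<in>J. matpow A N m i j * h j))"
proof -
  have "(\<Sum>j\<in>J. matexp A N t i j * h j) = (\<Sum>j\<in>J. \<Sum>m. t ^ m / fact m * matpow A N m i j * h j)"
    unfolding matexp_def using assms
    by (intro sum.cong refl suminf_mult2 summable_norm_cancel[OF summable_matexp_series]) auto
  also have "\<dots> = (\<Sum>m. \<Sum>j\<in>J. t ^ m / fact m * matpow A N m i j * h j)"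
    using assms
    by (intro suminf_sum[symmetric] summable_mult2 summable_norm_cancel[OF summable_matexp_series]) auto
  finally show ?thesis
    by (simp add: sum_distrib_left mult.assoc)
qed

lemma sum_binomial_Suc:
  fixes g :: "nat \<Rightarrow> real"
  shows "(\<Sum>k\<le>m. of_nat (m choose k) * g (Suc k)) + (\<Sum>k\<le>m. of_nat (m choose k) * g k)
       = (\<Sum>k\<le>Suc m. of_nat (Suc m choose k) * g k)"
proof -
  have "(\<Sum>k\<le>Suc m. of_nat (Suc m choose k) * g k)
      = g 0 + (\<Sum>k\<le>m. of_nat (Suc m choose Suc k) * g (Suc k))"
    by (subst sum.atMost_Suc_shift) simp
  moreover have "(\<Sum>k\<le>m. of_nat (Suc m choose Suc k) * g (Suc k))
      = (\<Sum>k\<le>m. of_nat (m choose k) * g (Suc k)) + (\<Sum>k\<le>m. of_nat (m choose Suc k) * g (Suc k))"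
    by (simp add: sum.distrib[symmetric] distrib_right)
  moreover have "(\<Sum>k\<le>Suc m. of_nat (m choose k) * g k)
      = g 0 + (\<Sum>k\<le>m. of_nat (m choose Suc k) * g (Suc k))"
    by (subst sum.atMost_Suc_shift) simp
  moreover have "(\<Sum>k\<le>Suc m. of_nat (m choose k) * g k) = (\<Sum>k\<le>m. of_nat (m choose k) * g k)"
    by simp
  ultimately show ?thesis
    by linarith
qed

lemma matpow_add_diag:
  assumes "j \<in> {1..N}"
  shows "matpow (\<lambda>a b. A a b + (if a = b then c else 0)) N m i j
       = (\<Sum>k\<le>m. of_nat (m choose k) * c ^ (m - k) * matpow A N k i j)"
  using assms
proof (induction m arbitrary: j)
  case (Suc m)
  let ?A' = "\<lambda>a b. A a b + (if a = b then c else 0)"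
  define g where "g k = c ^ (Suc m - k) * matpow A N k i j" for k
  have "matpow ?A' N (Suc m) i j = (\<Sum>l\<in>{1..N}. matpow ?A' N m i l * A l j)
      + (\<Sum>l\<in>{1..N}. matpow ?A' N m i l * (if l = j then c else 0))"
    by (simp add: distrib_left sum.distrib)
  also have "(\<Sum>l\<in>{1..N}. matpow ?A' N m i l * (if l = j then c else 0)) = c * matpow ?A' N m i j"
    using Suc.prems by (simp add: if_distrib cong: if_cong)
  also have "(\<Sum>l\<in>{1..N}. matpow ?A' N m i l * A l j)
      = (\<Sum>l\<in>{1..N}. (\<Sum>k\<le>m. of_nat (m choose k) * c ^ (m - k) * matpow A N k i l) * A l j)"
    by (intro sum.cong) (auto simp: Suc.IH)
  also have "\<dots> = (\<Sum>k\<le>m. of_nat (m choose k) * c ^ (m - k) * matpow A N (Suc k) i j)"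
    by (simp add: sum_distrib_right sum_distrib_left mult.assoc) (rule sum.swap)
  also have "\<dots> = (\<Sum>k\<le>m. of_nat (m choose k) * g (Suc k))"
    by (simp add: g_def mult.assoc)
  also have "c * matpow ?A' N m i j = (\<Sum>k\<le>m. of_nat (m choose k) * g k)"
    using Suc.IH[OF Suc.prems] by (simp add: g_def sum_distrib_left Suc_diff_le mult_ac)
  finally have "matpow ?A' N (Suc m) i j
      = (\<Sum>k\<le>m. of_nat (m choose k) * g (Suc k)) + (\<Sum>k\<le>m. of_nat (m choose k) * g k)" .
  also have "\<dots> = (\<Sum>k\<le>Suc m. of_nat (Suc m choose k) * g k)"
    by (rule sum_binomial_Suc)
  also have "\<dots> = (\<Sum>k\<le>Suc m. of_nat (Suc m choose k) * c ^ (Suc m - k) * matpow A N k i j)"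
    by (simp add: g_def mult.assoc)
  finally show ?case .
qed simp

lemma matexp_add_diag:
  assumes "j \<in> {1..N}"
  shows "matexp (\<lambda>a b. A a b + (if a = b then c else 0)) N t i j = exp (c * t) * matexp A N t i j"
proof -
  let ?b = "\<lambda>m. t ^ m / fact m * matpow A N m i j"
  let ?a = "\<lambda>m. (c * t) ^ m / fact m"
  have "t ^ m / fact m * matpow (\<lambda>a b. A a b + (if a = b then c else 0)) N m i j
      = (\<Sum>k\<le>m. ?b k * ?a (m - k))" for m
  proof -
    have "t ^ m / fact m * (of_nat (m choose k) * c ^ (m - k) * matpow A N k i j) = ?b k * ?a (m - k)"
      if "k \<le> m" for k
    proof -
      have "t ^ m = t ^ k * t ^ (m - k)"
        using that by (simp flip: power_add)
      moreover have "(of_nat (m choose k) :: real) = fact m / (fact k * fact (m - k))"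
        using that by (rule binomial_fact)
      ultimately show ?thesis
        by (simp add: power_mult_distrib)
    qed
    then show ?thesis
      by (simp add: matpow_add_diag[OF assms] sum_distrib_left)
  qed
  then have "matexp (\<lambda>a b. A a b + (if a = b then c else 0)) N t i j = (\<Sum>m. \<Sum>k\<le>m. ?b k * ?a (m - k))"
    by (simp add: matexp_def)
  also have "\<dots> = (\<Sum>m. ?b m) * (\<Sum>m. ?a m)"
  proof (rule Cauchy_product[symmetric, OF summable_matexp_series[OF assms]])
    show "summable (\<lambda>m. norm (?a m))"
      using exp_series_sums[of "\<bar>c * t\<bar>"] by (simp add: sums_summable power_abs)
  qed
  also have "\<dots> = exp (c * t) * matexp A N t i j"
    using exp_series_sums[of "c * t"] by (simp add: sums_iff matexp_def)
  finally show ?thesis .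
qed

lemma matpow_nonneg:
  assumes "\<And>l j. l \<in> {1..N} \<Longrightarrow> 0 \<le> A l j"
  shows "0 \<le> matpow A N m i j"
  by (induction m arbitrary: j) (auto intro!: sum_nonneg mult_nonneg_nonneg assms)

lemma sum_matpow_row:
  assumes "\<And>l. l \<in> {1..N} \<Longrightarrow> (\<Sum>j\<in>{1..N}. A l j) = r" "i \<in> {1..N}"
  shows "(\<Sum>j\<in>{1..N}. matpow A N m i j) = r ^ m"
proof (induction m)
  case (Suc m)
  have "(\<Sum>j\<in>{1..N}. matpow A N (Suc m) i j) = (\<Sum>l\<in>{1..N}. matpow A N m i l * (\<Sum>j\<in>{1..N}. A l j))"
    by (simp add: sum_distrib_left) (rule sum.swap)
  also have "\<dots> = (\<Sum>l\<in>{1..N}. matpow A N m i l * r)"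
    using assms(1) by (intro sum.cong) auto
  finally show ?case
    using Suc by (simp add: sum_distrib_right[symmetric])
qed (use assms(2) in simp)

section \<open>Nonnegative lower triangular matrices with constant row sums\<close>

lemma sum_by_parts_cumulative:
  fixes w h :: "nat \<Rightarrow> real"
  shows "(\<Sum>l\<in>{1..N}. w l * h l)
       = (\<Sum>l\<in>{1..N}. w l) * h N + (\<Sum>M\<in>{1..<N}. (h M - h (Suc M)) * (\<Sum>l\<in>{1..M}. w l))"
proof (induction N)
  case (Suc N)
  then show ?case
    by (cases "N = 0") (simp_all add: algebra_simps)
qed simp

text \<open>After division by \<open>c ^ r\<close>, \<open>g\<close> is nonincreasing and its partial sums are bounded by a
  telescoping sum of \<open>W\<close>.\<close>

lemma lyapunov_sequence_bound:
  fixes g W :: "nat \<Rightarrow> real"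
  assumes "0 < c" "\<And>r. 0 \<le> W r"
    and W_step: "\<And>r. W (Suc r) \<le> c * W r - g r"
    and g_step: "\<And>r. g (Suc r) \<le> c * g r"
  shows "g m \<le> c ^ Suc m * W 0 / real (Suc m)"
proof -
  define gh where "gh r = g r / c ^ r" for r
  define Wh where "Wh r = W r / c ^ r" for r
  have gh_le: "gh r \<le> c * (Wh r - Wh (Suc r))" for r
  proof -
    have "g r / c ^ r \<le> (c * W r - W (Suc r)) / c ^ r"
      using W_step[of r] assms(1) by (intro divide_right_mono) auto
    also have "\<dots> = c * (W r / c ^ r - W (Suc r) / c ^ Suc r)"
      using assms(1) by (simp add: field_simps)
    finally show ?thesis
      by (simp add: gh_def Wh_def)
  qed
  have gh_antimono: "gh (Suc r) \<le> gh r" for r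
  proof -
    have "g (Suc r) / c ^ Suc r \<le> (c * g r) / c ^ Suc r"
      using g_step[of r] assms(1) by (intro divide_right_mono) auto
    then show ?thesis
      using assms(1) by (simp add: gh_def)
  qed
  have "real (Suc m) * gh m = (\<Sum>r<Suc m. gh m)"
    by simp
  also have "\<dots> \<le> (\<Sum>r<Suc m. gh r)"
    by (intro sum_mono lift_Suc_antimono_le[of gh, OF gh_antimono]) simp
  also have "\<dots> \<le> (\<Sum>r<Suc m. c * (Wh r - Wh (Suc r)))"
    by (intro sum_mono gh_le)
  also have "\<dots> = c * (Wh 0 - Wh (Suc m))"
    by (simp add: sum_distrib_left[symmetric] sum_lessThan_telescope')
  also have "\<dots> \<le> c * W 0"
    using assms(1,2) by (simp add: Wh_def)
  finally have "gh m \<le> c * W 0 / real (Suc m)"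
    by (simp add: field_simps)
  then show ?thesis
    using assms(1) by (simp add: gh_def field_simps)
qed

locale lower_stochastic =
  fixes B :: "nat \<Rightarrow> nat \<Rightarrow> real" and N :: nat and c :: real
  assumes nonneg: "\<And>l j. l \<in> {1..N} \<Longrightarrow> 0 \<le> B l j"
    and lower: "\<And>l j. l < j \<Longrightarrow> B l j = 0"
    and row_sum: "\<And>l. l \<in> {1..N} \<Longrightarrow> (\<Sum>j\<in>{1..N}. B l j) = c"
begin

lemma matexp_nonneg:
  assumes "0 \<le> t" "j \<in> {1..N}"
  shows "0 \<le> matexp B N t i j"
  unfolding matexp_def using assms
  by (intro suminf_nonneg summable_norm_cancel[OF summable_matexp_series]
      mult_nonneg_nonneg divide_nonneg_nonneg matpow_nonneg nonneg) auto

lemma sum_matexp_row: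
  assumes "i \<in> {1..N}"
  shows "(\<Sum>j\<in>{1..N}. matexp B N t i j) = exp (c * t)"
proof -
  have "(\<Sum>j\<in>{1..N}. matexp B N t i j) = (\<Sum>m. t ^ m / fact m * (\<Sum>j\<in>{1..N}. matpow B N m i j))"
    using matexp_weighted_sum[of "{1..N}" N B t i "\<lambda>_. 1"] by simp
  also have "\<dots> = (\<Sum>m. (c * t) ^ m / fact m)"
    by (simp only: sum_matpow_row[OF row_sum assms]) (simp add: power_mult_distrib mult_ac)
  also have "\<dots> = exp (c * t)"
    using exp_series_sums by (rule sums_unique[symmetric])
  finally show ?thesis .
qed

lemma matpow_tail_Suc_le:
  assumes "K \<le> N" and lower_mass: "\<And>l. l \<in> {K<..N} \<Longrightarrow> \<Lambda> \<le> (\<Sum>j\<in>{1..K}. B l j)"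
  shows "(\<Sum>j\<in>{K<..N}. matpow B N (Suc m) i j) \<le> (c - \<Lambda>) * (\<Sum>j\<in>{K<..N}. matpow B N m i j)"
proof -
  have tail_row: "(\<Sum>j\<in>{K<..N}. B l j) \<le> (if K < l then c - \<Lambda> else 0)" if l: "l \<in> {1..N}" for l
  proof (cases "K < l")
    case True
    have "{1..N} = {1..K} \<union> {K<..N}"
      using assms(1) by auto
    then have "c = (\<Sum>j\<in>{1..K}. B l j) + (\<Sum>j\<in>{K<..N}. B l j)"
      using row_sum[OF l] by (simp add: sum.union_disjoint[symmetric] ivl_disj_int)
    then show ?thesis
      using lower_mass[of l] True l by auto
  next
    case False
    then have "(\<Sum>j\<in>{K<..N}. B l j) = 0"
      by (intro sum.neutral) (auto intro: lower)
    then show ?thesis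
      using False by simp
  qed
  have "(\<Sum>j\<in>{K<..N}. matpow B N (Suc m) i j) = (\<Sum>l\<in>{1..N}. matpow B N m i l * (\<Sum>j\<in>{K<..N}. B l j))"
    by (simp add: sum_distrib_left) (rule sum.swap)
  also have "\<dots> \<le> (\<Sum>l\<in>{1..N}. matpow B N m i l * (if K < l then c - \<Lambda> else 0))"
    by (intro sum_mono mult_left_mono tail_row matpow_nonneg nonneg) auto
  also have "\<dots> = (c - \<Lambda>) * (\<Sum>j\<in>{K<..N}. matpow B N m i j)"
    by (simp add: sum_distrib_left if_distrib sum.inter_filter[symmetric] mult_ac
        greaterThanAtMost_def atLeastAtMost_def cong: if_cong) (rule sum.cong; auto)
  finally show ?thesis .
qed

lemma matpow_tail_le_geometric:
  assumes "K \<le> N" "\<Lambda> \<le> c" "\<And>l. l \<in> {K<..N} \<Longrightarrow> \<Lambda> \<le> (\<Sum>j\<in>{1..K}. B l j)"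
  shows "(\<Sum>j\<in>{K<..N}. matpow B N m i j) \<le> (c - \<Lambda>) ^ m"
proof (induction m)
  case 0
  show ?case
    by (simp add: sum.delta)
next
  case (Suc m)
  have "(\<Sum>j\<in>{K<..N}. matpow B N (Suc m) i j) \<le> (c - \<Lambda>) * (\<Sum>j\<in>{K<..N}. matpow B N m i j)"
    using assms(1,3) by (rule matpow_tail_Suc_le)
  also have "\<dots> \<le> (c - \<Lambda>) * (c - \<Lambda>) ^ m"
    using Suc.IH assms(2) by (intro mult_left_mono) auto
  finally show ?case
    by simp
qed

lemma matexp_tail_le_exp:
  assumes "0 \<le> t" "K \<le> N" "\<Lambda> \<le> c"
    and "\<And>l. l \<in> {K<..N} \<Longrightarrow> \<Lambda> \<le> (\<Sum>j\<in>{1..K}. B l j)"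
  shows "(\<Sum>j\<in>{K<..N}. matexp B N t i j) \<le> exp ((c - \<Lambda>) * t)"
proof -
  have "(\<Sum>j\<in>{K<..N}. matexp B N t i j) = (\<Sum>m. t ^ m / fact m * (\<Sum>j\<in>{K<..N}. matpow B N m i j))"
    using matexp_weighted_sum[of "{K<..N}" N B t i "\<lambda>_. 1"] by (simp add: subset_eq)
  also have "\<dots> \<le> (\<Sum>m. ((c - \<Lambda>) * t) ^ m / fact m)"
  proof (rule suminf_le)
    fix m
    have "t ^ m / fact m * (\<Sum>j\<in>{K<..N}. matpow B N m i j) \<le> t ^ m / fact m * (c - \<Lambda>) ^ m"
      using assms by (intro mult_left_mono matpow_tail_le_geometric) auto
    then show "t ^ m / fact m * (\<Sum>j\<in>{K<..N}. matpow B N m i j) \<le> ((c - \<Lambda>) * t) ^ m / fact m"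
      by (simp add: power_mult_distrib mult_ac)
  qed (use summable_matexp_weighted_series[of "{K<..N}" N t B i "\<lambda>_. 1"] exp_series_sums
       in \<open>auto simp: subset_eq intro: sums_summable\<close>)
  also have "\<dots> = exp ((c - \<Lambda>) * t)"
    using exp_series_sums by (rule sums_unique[symmetric])
  finally show ?thesis .
qed

lemma matpow_potential_Suc_le:
  assumes drift: "\<And>l. l \<in> {1..N} \<Longrightarrow> (\<Sum>j\<in>{1..N}. B l j * V j) \<le> c * V l - (if M < l then 1 else 0)"
  shows "(\<Sum>j\<in>{1..N}. matpow B N (Suc r) i j * V j)
    \<le> c * (\<Sum>j\<in>{1..N}. matpow B N r i j * V j) - (\<Sum>j\<in>{M<..N}. matpow B N r i j)"
proof -
  have indicator: "(\<Sum>l\<in>{1..N}. matpow B N r i l * (if M < l then 1 else 0)) = (\<Sum>j\<in>{M<..N}. matpow B N r i j)"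
    by (simp add: sum.inter_filter[symmetric] if_distrib cong: if_cong) (rule sum.cong; auto)
  have "(\<Sum>j\<in>{1..N}. matpow B N (Suc r) i j * V j) = (\<Sum>l\<in>{1..N}. matpow B N r i l * (\<Sum>j\<in>{1..N}. B l j * V j))"
    by (simp add: sum_distrib_left sum_distrib_right mult_ac) (rule sum.swap)
  also have "\<dots> \<le> (\<Sum>l\<in>{1..N}. matpow B N r i l * (c * V l - (if M < l then 1 else 0)))"
    by (intro sum_mono mult_left_mono drift matpow_nonneg nonneg) auto
  also have "\<dots> = c * (\<Sum>j\<in>{1..N}. matpow B N r i j * V j) - (\<Sum>j\<in>{M<..N}. matpow B N r i j)"
    by (simp add: right_diff_distrib sum_subtractf indicator[symmetric] sum_distrib_left mult_ac)
  finally show ?thesis .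
qed

lemma matpow_tail_le_lyapunov:
  assumes V_nonneg: "\<And>j. 0 \<le> V j" and "0 < c" "i \<in> {1..N}" "M \<le> N"
    and drift: "\<And>l. l \<in> {1..N} \<Longrightarrow> (\<Sum>j\<in>{1..N}. B l j * V j) \<le> c * V l - (if M < l then 1 else 0)"
  shows "(\<Sum>j\<in>{M<..N}. matpow B N m i j) \<le> c ^ Suc m * V i / real (Suc m)"
proof -
  define W where "W r = (\<Sum>j\<in>{1..N}. matpow B N r i j * V j)" for r
  have "W 0 = (\<Sum>j\<in>{1..N}. if i = j then V j else 0)"
    unfolding W_def by (intro sum.cong) auto
  then have "W 0 = V i"
    using assms(3) by simp
  moreover have "0 \<le> W r" for r
    unfolding W_def by (intro sum_nonneg mult_nonneg_nonneg matpow_nonneg nonneg V_nonneg)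
  moreover have "(\<Sum>j\<in>{M<..N}. matpow B N (Suc r) i j) \<le> c * (\<Sum>j\<in>{M<..N}. matpow B N r i j)" for r
    using matpow_tail_Suc_le[OF assms(4), of 0] nonneg by (simp add: sum_nonneg)
  ultimately show ?thesis
    using lyapunov_sequence_bound[of c W "\<lambda>r. \<Sum>j\<in>{M<..N}. matpow B N r i j" m] assms(2)
      matpow_potential_Suc_le[OF drift] by (simp add: W_def)
qed

lemma matexp_tail_le_lyapunov:
  assumes "\<And>j. 0 \<le> V j" "0 < c" "i \<in> {1..N}" "M \<le> N" "0 < t"
    and "\<And>l. l \<in> {1..N} \<Longrightarrow> (\<Sum>j\<in>{1..N}. B l j * V j) \<le> c * V l - (if M < l then 1 else 0)"
  shows "(\<Sum>j\<in>{M<..N}. matexp B N t i j) \<le> V i / t * (exp (c * t) - 1)"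
proof -
  define e where "e m = (c * t) ^ m / fact m" for m
  have "e sums exp (c * t)"
    unfolding e_def by (rule exp_series_sums)
  then have "(\<lambda>m. e (Suc m)) sums (exp (c * t) - 1)"
    by (subst sums_Suc_iff) (simp add: e_def)
  then have e_sums: "(\<lambda>m. V i / t * e (Suc m)) sums (V i / t * (exp (c * t) - 1))"
    by (rule sums_mult)
  have "(\<Sum>j\<in>{M<..N}. matexp B N t i j) = (\<Sum>m. t ^ m / fact m * (\<Sum>j\<in>{M<..N}. matpow B N m i j))"
    using matexp_weighted_sum[of "{M<..N}" N B t i "\<lambda>_. 1"] by (simp add: subset_eq)
  also have "\<dots> \<le> (\<Sum>m. V i / t * e (Suc m))"
  proof (rule suminf_le)
    fix m
    have "t ^ m / fact m * (\<Sum>j\<in>{M<..N}. matpow B N m i j) \<le> t ^ m / fact m * (c ^ Suc m * V i / real (Suc m))"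
      using assms by (intro mult_left_mono matpow_tail_le_lyapunov) auto
    also have "\<dots> = V i / t * e (Suc m)"
      using assms(5) by (simp add: e_def field_simps power_mult_distrib)
    finally show "t ^ m / fact m * (\<Sum>j\<in>{M<..N}. matpow B N m i j) \<le> V i / t * e (Suc m)" .
  next
    show "summable (\<lambda>m. V i / t * e (Suc m))"
      using e_sums by (rule sums_summable)
  qed (use summable_matexp_weighted_series[of "{M<..N}" N t B i "\<lambda>_. 1"]
       in \<open>auto simp: subset_eq\<close>)
  also have "\<dots> = V i / t * (exp (c * t) - 1)"
    using e_sums by (rule sums_unique[symmetric])
  finally show ?thesis .
qed

end

locale monotone_lower_stochastic = lower_stochastic +
  assumes cumulative_antimono: "\<And>M a b. 1 \<le> a \<Longrightarrow> a \<le> b \<Longrightarrow> b \<le> N \<Longrightarrow>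
    (\<Sum>j\<in>{1..M}. B b j) \<le> (\<Sum>j\<in>{1..M}. B a j)"
begin

lemma weighted_row_antimono:
  assumes h_antimono: "\<And>a b. 1 \<le> a \<Longrightarrow> a \<le> b \<Longrightarrow> b \<le> N \<Longrightarrow> h b \<le> h a"
    and "1 \<le> a" "a \<le> b" "b \<le> N"
  shows "(\<Sum>l\<in>{1..N}. B b l * h l) \<le> (\<Sum>l\<in>{1..N}. B a l * h l)"
proof -
  have "(\<Sum>M\<in>{1..<N}. (h M - h (Suc M)) * (\<Sum>l\<in>{1..M}. B b l))
      \<le> (\<Sum>M\<in>{1..<N}. (h M - h (Suc M)) * (\<Sum>l\<in>{1..M}. B a l))"
    using assms by (intro sum_mono mult_left_mono cumulative_antimono) (auto simp: h_antimono)
  moreover have "(\<Sum>l\<in>{1..N}. B x l * h l)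
      = c * h N + (\<Sum>M\<in>{1..<N}. (h M - h (Suc M)) * (\<Sum>l\<in>{1..M}. B x l))" if "x \<in> {1..N}" for x
    using sum_by_parts_cumulative[of "B x" h N] row_sum[OF that] by simp
  ultimately show ?thesis
    using assms by simp
qed

lemma matpow_weighted_row_antimono:
  assumes "\<And>a b. 1 \<le> a \<Longrightarrow> a \<le> b \<Longrightarrow> b \<le> N \<Longrightarrow> h b \<le> h a"
    and "1 \<le> a" "a \<le> b" "b \<le> N"
  shows "(\<Sum>l\<in>{1..N}. matpow B N m b l * h l) \<le> (\<Sum>l\<in>{1..N}. matpow B N m a l * h l)"
  using assms(1)
proof (induction m arbitrary: h)
  case 0
  have "(\<Sum>l\<in>{1..N}. matpow B N 0 i l * h l) = h i" if "i \<in> {1..N}" for i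
  proof -
    have "(\<Sum>l\<in>{1..N}. matpow B N 0 i l * h l) = (\<Sum>l\<in>{1..N}. if i = l then h l else 0)"
      by (intro sum.cong) auto
    then show ?thesis
      using that by simp
  qed
  then show ?case
    using assms(2-4) 0[of a b] by simp
next
  case (Suc m)
  define h' where "h' l' = (\<Sum>l\<in>{1..N}. B l' l * h l)" for l'
  have step: "(\<Sum>l\<in>{1..N}. matpow B N (Suc m) i l * h l) = (\<Sum>l'\<in>{1..N}. matpow B N m i l' * h' l')" for i
    by (simp add: h'_def sum_distrib_left sum_distrib_right mult.assoc) (rule sum.swap)
  have "\<And>a b. 1 \<le> a \<Longrightarrow> a \<le> b \<Longrightarrow> b \<le> N \<Longrightarrow> h' b \<le> h' a"
    unfolding h'_def by (rule weighted_row_antimono[OF Suc.prems])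
  then show ?case
    unfolding step by (rule Suc.IH)
qed

lemma matexp_weighted_row_antimono:
  assumes "0 \<le> t" "\<And>a b. 1 \<le> a \<Longrightarrow> a \<le> b \<Longrightarrow> b \<le> N \<Longrightarrow> h b \<le> h a"
    and "1 \<le> a" "a \<le> b" "b \<le> N"
  shows "(\<Sum>l\<in>{1..N}. matexp B N t b l * h l) \<le> (\<Sum>l\<in>{1..N}. matexp B N t a l * h l)"
  unfolding matexp_weighted_sum[OF order_refl]
proof (rule suminf_le)
  fix m
  show "t ^ m / fact m * (\<Sum>l\<in>{1..N}. matpow B N m b l * h l) \<le> t ^ m / fact m * (\<Sum>l\<in>{1..N}. matpow B N m a l * h l)"
    using assms by (intro mult_left_mono matpow_weighted_row_antimono) auto
qed (intro summable_matexp_weighted_series order_refl)+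

end

section \<open>The block-counting generator and its uniformization\<close>

lemma genQ_eq_0_if_less: "l < j \<Longrightarrow> genQ F l j = 0"
  by (simp add: genQ_def)

lemma sum_genQ_row:
  assumes "l \<in> {1..N}"
  shows "(\<Sum>j\<in>{1..N}. genQ F l j * w j) = (\<Sum>j\<in>{1..<l}. rate F l j * (w j - w l))"
proof -
  have "(\<Sum>j\<in>{1..N}. genQ F l j * w j) = (\<Sum>j\<in>{1..<Suc l}. genQ F l j * w j)"
    by (rule sum.mono_neutral_right) (use assms in \<open>auto simp: genQ_eq_0_if_less\<close>)
  also have "\<dots> = (\<Sum>j\<in>{1..<l}. genQ F l j * w j) + genQ F l l * w l"
    using assms by simp
  also have "(\<Sum>j\<in>{1..<l}. genQ F l j * w j) = (\<Sum>j\<in>{1..<l}. rate F l j * w j)"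
    by (intro sum.cong) (auto simp: genQ_def)
  also have "genQ F l l * w l = - (\<Sum>j\<in>{1..<l}. rate F l j * w l)"
    by (simp add: genQ_def sum_distrib_right)
  finally show ?thesis
    by (simp add: right_diff_distrib sum_subtractf)
qed

definition uniformized :: "(nat \<Rightarrow> real) \<Rightarrow> real \<Rightarrow> nat \<Rightarrow> nat \<Rightarrow> real" where
  "uniformized F c a b = genQ F a b + (if a = b then c else 0)"

lemma sum_uniformized_row:
  assumes "l \<in> {1..N}"
  shows "(\<Sum>j\<in>{1..N}. uniformized F c l j * w j) = c * w l + (\<Sum>j\<in>{1..<l}. rate F l j * (w j - w l))"
proof -
  have "(\<Sum>j\<in>{1..N}. uniformized F c l j * w j)
      = (\<Sum>j\<in>{1..N}. genQ F l j * w j + (if l = j then c * w j else 0))"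
    by (intro sum.cong) (simp_all add: uniformized_def distrib_right)
  also have "\<dots> = (\<Sum>j\<in>{1..N}. genQ F l j * w j) + c * w l"
    using assms by (simp add: sum.distrib)
  finally show ?thesis
    unfolding sum_genQ_row[OF assms] by simp
qed

lemma sum_trans_eq_uniformized:
  assumes "J \<subseteq> {1..N}"
  shows "(\<Sum>j\<in>J. trans F N t i j * h j) = exp (- (c * t)) * (\<Sum>j\<in>J. matexp (uniformized F c) N t i j * h j)"
proof -
  have unif: "uniformized F c = (\<lambda>a b. genQ F a b + (if a = b then c else 0))"
    by (simp add: fun_eq_iff uniformized_def)
  have "matexp (uniformized F c) N t i j = exp (c * t) * trans F N t i j" if "j \<in> J" for j
    unfolding unif trans_eq_matexp using assms that by (intro matexp_add_diag) auto
  then show ?thesis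
    by (simp add: sum_distrib_left exp_minus field_simps)
qed

lemma trans_eq_0_if_less: "i < j \<Longrightarrow> trans F N t i j = 0"
  unfolding trans_eq_matexp by (rule matexp_eq_0_if_less[OF genQ_eq_0_if_less])

lemma trans_restrict: "i \<le> n \<Longrightarrow> n \<le> N \<Longrightarrow> trans F n t i j = trans F N t i j"
  unfolding trans_eq_matexp by (rule matexp_restrict[OF genQ_eq_0_if_less])

lemma trans_diag: "trans F n t n n = exp (t * genQ F n n)"
proof -
  have "mpow F n m n n = genQ F n n ^ m" for m
  proof (induction m)
    case (Suc m)
    show ?case
    proof (cases "n = 0")
      case False
      then have n: "n \<in> {1..n}"
        by simp
      have "mpow F n (Suc m) n n = (\<Sum>l\<in>{1..n}. mpow F n m n l * genQ F l n)"
        by simp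
      also have "\<dots> = mpow F n m n n * genQ F n n + (\<Sum>l\<in>{1..n} - {n}. mpow F n m n l * genQ F l n)"
        by (simp only: sum.remove[OF finite_atLeastAtMost n])
      also have "(\<Sum>l\<in>{1..n} - {n}. mpow F n m n l * genQ F l n) = 0"
        by (rule sum.neutral) (auto simp: genQ_eq_0_if_less)
      finally show ?thesis
        using Suc.IH by simp
    qed (simp add: genQ_def)
  qed simp
  then show ?thesis
    using exp_series_sums[of "t * genQ F n n"] by (simp add: trans_def power_mult_distrib sums_iff)
qed

lemma sum_uniformized_initial:
  "(\<Sum>j\<in>{1..M}. uniformized F c x j) = (\<Sum>j\<in>{1..min M x}. uniformized F c x j)"
  by (rule sum.mono_neutral_right) (auto simp: uniformized_def genQ_eq_0_if_less)

section \<open>Rates of the block-counting process\<close>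

locale coalescent_rates =
  fixes F :: "nat \<Rightarrow> real"
  assumes F_nonneg: "\<And>k. 0 \<le> F k"
    and summable_F_div: "summable (\<lambda>k. F (Suc k) / real (Suc k))"
begin

lemma summable_rate_series:
  assumes "j < b"
  shows "summable (\<lambda>k. F (Suc k) * occ b (Suc k) j)"
proof (rule summable_comparison_test')
  show "summable (\<lambda>k. real b ^ 2 * (F (Suc k) / real (Suc k)))"
    by (rule summable_mult[OF summable_F_div])
  fix k
  have "F (Suc k) * occ b (Suc k) j \<le> F (Suc k) * (real b ^ 2 / real (Suc k))"
    using assms by (intro mult_left_mono occ_le_collision F_nonneg) auto
  moreover have "0 \<le> F (Suc k) * occ b (Suc k) j"
    using F_nonneg[of "Suc k"] occ_nonneg[of b "Suc k" j] by simp
  ultimately show "norm (F (Suc k) * occ b (Suc k) j) \<le> real b ^ 2 * (F (Suc k) / real (Suc k))"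
    by (simp add: mult_ac)
qed

lemma rate_nonneg:
  assumes "j < b"
  shows "0 \<le> rate F b j"
  unfolding rate_def using F_nonneg[of 0]
  by (intro add_nonneg_nonneg suminf_nonneg summable_rate_series[OF assms]
      mult_nonneg_nonneg F_nonneg occ_nonneg) auto

lemma summable_sum_occ_series:
  assumes "\<And>j. j \<in> J \<Longrightarrow> j < b"
  shows "summable (\<lambda>k. F (Suc k) * (\<Sum>j\<in>J. occ b (Suc k) j))"
  unfolding sum_distrib_left using assms by (intro summable_sum summable_rate_series)

lemma sum_rate:
  assumes "finite J" "\<And>j. j \<in> J \<Longrightarrow> j < b"
  shows "(\<Sum>j\<in>J. rate F b j) = (\<Sum>j\<in>J. if j + 1 = b then F 0 * real (b choose 2) else 0)
           + (\<Sum>k. F (Suc k) * (\<Sum>j\<in>J. occ b (Suc k) j))"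
proof -
  have "(\<Sum>j\<in>J. \<Sum>k. F (Suc k) * occ b (Suc k) j) = (\<Sum>k. \<Sum>j\<in>J. F (Suc k) * occ b (Suc k) j)"
    using assms(2) by (intro suminf_sum[symmetric] summable_rate_series)
  then show ?thesis
    by (simp add: rate_def sum.distrib sum_distrib_left)
qed

lemma sum_rate_le_total:
  assumes "F 0 = 0" "summable (\<lambda>k. F (Suc k))"
  shows "(\<Sum>j\<in>{1..<b}. rate F b j) \<le> (\<Sum>k. F (Suc k))"
proof -
  have "(\<Sum>j\<in>{1..<b}. rate F b j) = (\<Sum>j\<in>{1..<b}. if j + 1 = b then F 0 * real (b choose 2) else 0)
      + (\<Sum>k. F (Suc k) * (\<Sum>j\<in>{1..<b}. occ b (Suc k) j))"
    by (rule sum_rate) auto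
  moreover have "(\<Sum>j\<in>{1..<b}. if j + 1 = b then F 0 * real (b choose 2) else 0) = 0"
    using assms(1) by (intro sum.neutral) simp
  ultimately have "(\<Sum>j\<in>{1..<b}. rate F b j) = (\<Sum>k. F (Suc k) * (\<Sum>j\<in>{1..<b}. occ b (Suc k) j))"
    by simp
  also have "\<dots> \<le> (\<Sum>k. F (Suc k))"
  proof (rule suminf_le)
    fix k
    show "F (Suc k) * (\<Sum>j\<in>{1..<b}. occ b (Suc k) j) \<le> F (Suc k)"
      using F_nonneg[of "Suc k"] sum_occ_le_1[of "{1..<b}" "Suc k" b] by (simp add: mult_left_le)
  qed (use assms(2) summable_sum_occ_series[of "{1..<b}" b] in auto)
  finally show ?thesis .
qed

text \<open>At most \<open>M\<close> blocks remain after any event throwing the blocks into \<open>k \<le> M\<close> boxes.\<close>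

lemma partial_F_le_sum_rate:
  assumes "M < b"
  shows "(\<Sum>k<M. F (Suc k)) \<le> (\<Sum>j\<in>{1..M}. rate F b j)"
proof -
  have "(\<Sum>k<M. F (Suc k)) = (\<Sum>k<M. F (Suc k) * (\<Sum>j\<in>{1..M}. occ b (Suc k) j))"
    using assms by (intro sum.cong) (simp_all add: sum_occ_eq_1)
  also have "\<dots> \<le> (\<Sum>k. F (Suc k) * (\<Sum>j\<in>{1..M}. occ b (Suc k) j))"
    using assms
    by (intro sum_le_suminf summable_sum_occ_series) (auto intro!: mult_nonneg_nonneg F_nonneg sum_nonneg occ_nonneg)
  also have "\<dots> \<le> (\<Sum>j\<in>{1..M}. if j + 1 = b then F 0 * real (b choose 2) else 0)
      + (\<Sum>k. F (Suc k) * (\<Sum>j\<in>{1..M}. occ b (Suc k) j))"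
    using F_nonneg[of 0] by (simp add: sum_nonneg)
  also have "\<dots> = (\<Sum>j\<in>{1..M}. rate F b j)"
    using assms by (intro sum_rate[symmetric]) auto
  finally show ?thesis .
qed

lemma sum_rate_Suc_le:
  assumes "M < b"
  shows "(\<Sum>j\<in>{1..M}. rate F (Suc b) j) \<le> (\<Sum>j\<in>{1..M}. rate F b j)"
proof -
  have "(\<Sum>k. F (Suc k) * (\<Sum>j\<in>{1..M}. occ (Suc b) (Suc k) j))
      \<le> (\<Sum>k. F (Suc k) * (\<Sum>j\<in>{1..M}. occ b (Suc k) j))"
    using assms
    by (intro suminf_le mult_left_mono sum_occ_Suc_le F_nonneg summable_sum_occ_series) auto
  moreover have "(\<Sum>j\<in>{1..M}. rate F (Suc b) j)
      = (\<Sum>k. F (Suc k) * (\<Sum>j\<in>{1..M}. occ (Suc b) (Suc k) j))"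
    using assms sum_rate[of "{1..M}" "Suc b"] by simp
  moreover have "(\<Sum>k. F (Suc k) * (\<Sum>j\<in>{1..M}. occ b (Suc k) j)) \<le> (\<Sum>j\<in>{1..M}. rate F b j)"
    using assms sum_rate[of "{1..M}" b] F_nonneg[of 0] by (simp add: sum_nonneg)
  ultimately show ?thesis
    by linarith
qed

lemma sum_rate_antimono:
  assumes "M < a" "a \<le> b"
  shows "(\<Sum>j\<in>{1..M}. rate F b j) \<le> (\<Sum>j\<in>{1..M}. rate F a j)"
  using assms(2)
proof (induction b rule: dec_induct)
  case (step n)
  then show ?case
    using sum_rate_Suc_le[of M n] assms(1) by linarith
qed simp

lemma kingman_rate_le: "F 0 * real (Suc q choose 2) \<le> rate F (Suc q) q"
proof -
  have "0 \<le> (\<Sum>k. F (Suc k) * occ (Suc q) (Suc k) q)"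
    by (intro suminf_nonneg summable_rate_series mult_nonneg_nonneg F_nonneg occ_nonneg) simp
  then show ?thesis
    by (simp add: rate_def)
qed

lemma exists_uniformization_constant:
  obtains c where "X \<le> c" "\<And>l. l \<in> {1..N} \<Longrightarrow> (\<Sum>j\<in>{1..<l}. rate F l j) \<le> c"
proof -
  let ?R = "\<Sum>l\<in>{1..N}. \<Sum>j\<in>{1..<l}. rate F l j"
  have R_nonneg: "0 \<le> (\<Sum>j\<in>{1..<l}. rate F l j)" for l
    by (intro sum_nonneg rate_nonneg) auto
  have "(\<Sum>j\<in>{1..<l}. rate F l j) \<le> max X ?R" if "l \<in> {1..N}" for l
    using member_le_sum[of l "{1..N}" "\<lambda>l. \<Sum>j\<in>{1..<l}. rate F l j"] R_nonneg that by fastforce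
  then show thesis
    by (intro that[of "max X ?R"]) auto
qed

lemma lower_stochastic_uniformized:
  assumes exit_le: "\<And>l. l \<in> {1..N} \<Longrightarrow> (\<Sum>j\<in>{1..<l}. rate F l j) \<le> c"
  shows "lower_stochastic (uniformized F c) N c"
proof
  fix l j assume l: "l \<in> {1..N}"
  show "0 \<le> uniformized F c l j"
    using exit_le[OF l] by (auto simp: uniformized_def genQ_def rate_nonneg)
  show "(\<Sum>j\<in>{1..N}. uniformized F c l j) = c"
    using sum_uniformized_row[OF l, of F c "\<lambda>_. 1"] by simp
qed (simp add: uniformized_def genQ_def)

lemma monotone_lower_stochastic_uniformized:
  assumes "\<And>l. l \<in> {1..N} \<Longrightarrow> (\<Sum>j\<in>{1..<l}. rate F l j) \<le> c"
  shows "monotone_lower_stochastic (uniformized F c) N c"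
proof -
  let ?B = "uniformized F c"
  interpret lower_stochastic ?B N c
    using assms by (rule lower_stochastic_uniformized)
  have cumulative_le: "(\<Sum>j\<in>{1..M}. ?B x j) \<le> c" if "x \<in> {1..N}" for M x
  proof -
    have "(\<Sum>j\<in>{1..M}. ?B x j) = (\<Sum>j\<in>{1..min M x}. ?B x j)"
      by (rule sum_uniformized_initial)
    also have "\<dots> \<le> (\<Sum>j\<in>{1..N}. ?B x j)"
      by (rule sum_mono2) (use that nonneg in auto)
    finally show ?thesis
      using row_sum[OF that] by simp
  qed
  have cumulative_eq: "(\<Sum>j\<in>{1..M}. ?B x j) = c" if "x \<in> {1..N}" "x \<le> M" for M x
  proof -
    have "(\<Sum>j\<in>{1..M}. ?B x j) = (\<Sum>j\<in>{1..x}. ?B x j)"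
      using sum_uniformized_initial[where M = M and x = x] that by simp
    also have "\<dots> = (\<Sum>j\<in>{1..N}. ?B x j)"
      by (rule sum.mono_neutral_left) (use that in \<open>auto intro: lower\<close>)
    finally show ?thesis
      using row_sum[OF that(1)] by simp
  qed
  have cumulative_rate: "(\<Sum>j\<in>{1..M}. ?B x j) = (\<Sum>j\<in>{1..M}. rate F x j)" if "M < x" for M x
    using that by (intro sum.cong) (auto simp: uniformized_def genQ_def)
  show ?thesis
  proof
    fix M a b assume ab: "1 \<le> a" "a \<le> b" "b \<le> N"
    show "(\<Sum>j\<in>{1..M}. ?B b j) \<le> (\<Sum>j\<in>{1..M}. ?B a j)"
    proof (cases "a \<le> M")
      case True
      then show ?thesis
        using cumulative_le[of b M] cumulative_eq[of a M] ab by simp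
    next
      case False
      then show ?thesis
        using cumulative_rate[of M a] cumulative_rate[of M b] sum_rate_antimono[of M a b] ab by simp
    qed
  qed
qed

lemma trans_nonneg:
  assumes "0 \<le> t" "1 \<le> j" "i \<le> N"
  shows "0 \<le> trans F N t i j"
proof (cases "j \<le> N")
  case True
  obtain c where "\<And>l. l \<in> {1..N} \<Longrightarrow> (\<Sum>j\<in>{1..<l}. rate F l j) \<le> c"
    using exists_uniformization_constant[of 0 N] by blast
  then interpret monotone_lower_stochastic "uniformized F c" N c
    by (rule monotone_lower_stochastic_uniformized)
  show ?thesis
    using sum_trans_eq_uniformized[of "{j}" N F t i "\<lambda>_. 1" c] matexp_nonneg[of t j i] assms True by simp
qed (use assms trans_eq_0_if_less in simp)

lemma sum_trans_row:
  assumes "i \<in> {1..N}"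
  shows "(\<Sum>j\<in>{1..N}. trans F N t i j) = 1"
proof -
  obtain c where "\<And>l. l \<in> {1..N} \<Longrightarrow> (\<Sum>j\<in>{1..<l}. rate F l j) \<le> c"
    using exists_uniformization_constant[of 0 N] by blast
  then interpret monotone_lower_stochastic "uniformized F c" N c
    by (rule monotone_lower_stochastic_uniformized)
  show ?thesis
    using sum_trans_eq_uniformized[of "{1..N}" N F t i "\<lambda>_. 1" c] sum_matexp_row[OF assms, of t]
    by (simp add: exp_minus field_simps)
qed

end

section \<open>Probability of at most \<open>M\<close> blocks\<close>

definition prob_at_most :: "(nat \<Rightarrow> real) \<Rightarrow> real \<Rightarrow> nat \<Rightarrow> nat \<Rightarrow> real" where
  "prob_at_most F t M n = (\<Sum>j\<in>{1..M}. trans F n t n j)"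

lemma comes_down_from_infinity_iff:
  "comes_down_from_infinity F \<longleftrightarrow> (\<forall>t>0. (\<lambda>M. lim (\<lambda>n. prob_at_most F t M n)) \<longlonglongrightarrow> 1)"
  by (simp add: comes_down_from_infinity_def prob_at_most_def)

lemma filterlim_partial_sums_at_top:
  fixes f :: "nat \<Rightarrow> real"
  assumes "\<And>k. 0 \<le> f k" "\<not> summable f"
  shows "filterlim (\<lambda>n. \<Sum>k<n. f k) at_top sequentially"
  unfolding filterlim_at_top eventually_sequentially
proof
  fix Z :: real
  have "\<exists>K. Z \<le> (\<Sum>k<K. f k)"
  proof (rule ccontr)
    assume "\<nexists>K. Z \<le> (\<Sum>k<K. f k)"
    then have "summable f"
      by (intro summableI_nonneg_bounded[where x = Z] assms(1)) (meson linear)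
    with assms(2) show False ..
  qed
  then obtain K where K: "Z \<le> (\<Sum>k<K. f k)"
    by blast
  have "Z \<le> (\<Sum>k<n. f k)" if "K \<le> n" for n
    using K sum_mono2[of "{..<n}" "{..<K}" f] that assms(1) by fastforce
  then show "\<exists>K. \<forall>n\<ge>K. Z \<le> (\<Sum>k<n. f k)"
    by blast
qed

context coalescent_rates
begin

lemma prob_at_most_eq_weighted:
  assumes "1 \<le> n" "n \<le> N"
  shows "prob_at_most F t M n = (\<Sum>j\<in>{1..N}. trans F N t n j * (if j \<le> M then 1 else 0))"
proof -
  have "prob_at_most F t M n = (\<Sum>j\<in>{1..M}. trans F N t n j)"
    unfolding prob_at_most_def using assms by (intro sum.cong refl trans_restrict) auto
  also have "\<dots> = (\<Sum>j\<in>{j\<in>{1..N}. j \<le> M}. trans F N t n j)"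
    by (rule sum.mono_neutral_right) (use assms in \<open>auto intro: trans_eq_0_if_less\<close>)
  also have "\<dots> = (\<Sum>j\<in>{1..N}. if j \<le> M then trans F N t n j else 0)"
    by (rule sum.inter_filter) simp
  also have "\<dots> = (\<Sum>j\<in>{1..N}. trans F N t n j * (if j \<le> M then 1 else 0))"
    by (intro sum.cong) auto
  finally show ?thesis .
qed

lemma prob_at_most_Suc_le:
  assumes "1 \<le> n" "0 \<le> t"
  shows "prob_at_most F t M (Suc n) \<le> prob_at_most F t M n"
proof -
  let ?h = "\<lambda>j::nat. if j \<le> M then 1 else (0::real)"
  obtain c where "\<And>l. l \<in> {1..Suc n} \<Longrightarrow> (\<Sum>j\<in>{1..<l}. rate F l j) \<le> c"
    using exists_uniformization_constant[of 0 "Suc n"] by blast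
  then interpret monotone_lower_stochastic "uniformized F c" "Suc n" c
    by (rule monotone_lower_stochastic_uniformized)
  have prob_eq: "prob_at_most F t M i
      = exp (- (c * t)) * (\<Sum>j\<in>{1..Suc n}. matexp (uniformized F c) (Suc n) t i j * ?h j)"
    if "1 \<le> i" "i \<le> Suc n" for i
    using prob_at_most_eq_weighted[OF that, of t M] sum_trans_eq_uniformized[of "{1..Suc n}" "Suc n" F t i ?h c]
    by simp
  have "(\<Sum>j\<in>{1..Suc n}. matexp (uniformized F c) (Suc n) t (Suc n) j * ?h j)
      \<le> (\<Sum>j\<in>{1..Suc n}. matexp (uniformized F c) (Suc n) t n j * ?h j)"
    using assms by (intro matexp_weighted_row_antimono) auto
  then show ?thesis
    using assms by (simp add: prob_eq)
qed

lemma prob_at_most_nonneg: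
  assumes "1 \<le> n" "0 \<le> t"
  shows "0 \<le> prob_at_most F t M n"
  unfolding prob_at_most_def using assms by (intro sum_nonneg trans_nonneg) auto

lemma prob_at_most_le_1:
  assumes "1 \<le> n" "0 \<le> t"
  shows "prob_at_most F t M n \<le> 1"
proof -
  have "prob_at_most F t M n = (\<Sum>j\<in>{1..n}. trans F n t n j * (if j \<le> M then 1 else 0))"
    using assms by (intro prob_at_most_eq_weighted) auto
  also have "\<dots> \<le> (\<Sum>j\<in>{1..n}. trans F n t n j)"
    using assms trans_nonneg by (intro sum_mono) auto
  also have "\<dots> = 1"
    using assms by (intro sum_trans_row) auto
  finally show ?thesis .
qed

lemma prob_at_most_eq_1:
  assumes "1 \<le> n" "n \<le> M"
  shows "prob_at_most F t M n = 1"
proof -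
  have "prob_at_most F t M n = (\<Sum>j\<in>{1..n}. trans F n t n j)"
    unfolding prob_at_most_def
    by (rule sum.mono_neutral_right) (use assms in \<open>auto intro: trans_eq_0_if_less\<close>)
  also have "\<dots> = 1"
    using assms by (intro sum_trans_row) auto
  finally show ?thesis .
qed

lemma prob_at_most_eq_1_minus_tail:
  assumes "M < n"
  shows "prob_at_most F t M n = 1 - (\<Sum>j\<in>{M<..n}. trans F n t n j)"
proof -
  have "{1..n} = {1..M} \<union> {M<..n}"
    using assms by auto
  then have "(\<Sum>j\<in>{1..n}. trans F n t n j) = prob_at_most F t M n + (\<Sum>j\<in>{M<..n}. trans F n t n j)"
    by (simp add: prob_at_most_def sum.union_disjoint ivl_disj_int)
  moreover have "(\<Sum>j\<in>{1..n}. trans F n t n j) = 1"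
    using assms by (intro sum_trans_row) auto
  ultimately show ?thesis
    by simp
qed

lemma convergent_prob_at_most:
  assumes "0 \<le> t"
  shows "convergent (\<lambda>n. prob_at_most F t M n)"
proof (rule Bseq_monoseq_convergent'_dec[where M = 1])
  show "Bseq (\<lambda>n. prob_at_most F t M (n + 1))"
    by (rule BseqI'[where K = 1]) (use prob_at_most_nonneg prob_at_most_le_1 assms in auto)
  show "prob_at_most F t M n \<le> prob_at_most F t M m" if "1 \<le> m" "m \<le> n" for m n
    using that(2)
  proof (induction n rule: dec_induct)
    case (step k)
    then show ?case
      using prob_at_most_Suc_le[of k t M] that assms by linarith
  qed simp
qed

lemma lim_prob_at_most_le:
  assumes "0 \<le> t" "\<And>n. K \<le> n \<Longrightarrow> prob_at_most F t M n \<le> L"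
  shows "lim (\<lambda>n. prob_at_most F t M n) \<le> L"
  using convergent_prob_at_most[OF assms(1)] assms(2)
  by (intro LIMSEQ_le_const2[of "\<lambda>n. prob_at_most F t M n"]) (auto simp: convergent_LIMSEQ_iff)

lemma lim_prob_at_most_ge:
  assumes "0 \<le> t" and tail_le: "\<And>n. M < n \<Longrightarrow> (\<Sum>j\<in>{M<..n}. trans F n t n j) \<le> \<delta>"
  shows "1 - \<delta> \<le> lim (\<lambda>n. prob_at_most F t M n)"
proof -
  have "0 \<le> (\<Sum>j\<in>{M<..Suc M}. trans F (Suc M) t (Suc M) j)"
    using assms(1) by (intro sum_nonneg trans_nonneg) auto
  then have "0 \<le> \<delta>"
    using tail_le[of "Suc M"] by simp
  then have "1 - \<delta> \<le> prob_at_most F t M n" if "1 \<le> n" for n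
    using that tail_le[of n] prob_at_most_eq_1_minus_tail[of M n t] prob_at_most_eq_1[of n M t]
    by (cases "M < n") auto
  then show ?thesis
    using convergent_prob_at_most[OF assms(1)]
    by (intro LIMSEQ_le_const[of "\<lambda>n. prob_at_most F t M n"]) (auto simp: convergent_LIMSEQ_iff)
qed

lemma comes_down_if_tails_vanish:
  assumes "\<And>t. 0 < t \<Longrightarrow> \<exists>\<delta>. \<delta> \<longlonglongrightarrow> 0 \<and>
    (\<forall>\<^sub>F M in sequentially. \<forall>n>M. (\<Sum>j\<in>{M<..n}. trans F n t n j) \<le> \<delta> M)"
  shows "comes_down_from_infinity F"
  unfolding comes_down_from_infinity_iff
proof (intro allI impI)
  fix t :: real assume t: "0 < t"
  obtain \<delta> where \<delta>: "\<delta> \<longlonglongrightarrow> 0"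
    and tail_le: "\<forall>\<^sub>F M in sequentially. \<forall>n>M. (\<Sum>j\<in>{M<..n}. trans F n t n j) \<le> \<delta> M"
    using assms[OF t] by blast
  show "(\<lambda>M. lim (\<lambda>n. prob_at_most F t M n)) \<longlonglongrightarrow> 1"
  proof (rule tendsto_sandwich[of "\<lambda>M. 1 - \<delta> M" _ _ "\<lambda>_. 1"])
    show "\<forall>\<^sub>F M in sequentially. 1 - \<delta> M \<le> lim (\<lambda>n. prob_at_most F t M n)"
      using tail_le by eventually_elim (use t lim_prob_at_most_ge in auto)
    show "\<forall>\<^sub>F M in sequentially. lim (\<lambda>n. prob_at_most F t M n) \<le> 1"
      using t by (intro always_eventually allI lim_prob_at_most_le[where K = 1] prob_at_most_le_1) auto
    show "(\<lambda>M. 1 - \<delta> M) \<longlonglongrightarrow> 1"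
      using tendsto_diff[OF tendsto_const[of 1] \<delta>] by simp
  qed simp
qed

text \<open>With finite total rate \<open>\<Lambda>\<close>, the chain started from \<open>n\<close> blocks stays at \<open>n\<close> up to time \<open>1\<close>
  with probability at least \<open>exp (- \<Lambda>)\<close>, uniformly in \<open>n\<close>.\<close>

lemma not_comes_down_if_summable:
  assumes F0: "F 0 = 0" and "summable (\<lambda>k. F (Suc k))"
  shows "\<not> comes_down_from_infinity F"
proof
  assume "comes_down_from_infinity F"
  then have lim_1: "(\<lambda>M. lim (\<lambda>n. prob_at_most F 1 M n)) \<longlonglongrightarrow> 1"
    by (simp add: comes_down_from_infinity_iff)
  define \<Lambda> where "\<Lambda> = (\<Sum>k. F (Suc k))"
  have "lim (\<lambda>n. prob_at_most F 1 M n) \<le> 1 - exp (- \<Lambda>)" for M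
  proof (rule lim_prob_at_most_le[where K = "Suc M"])
    fix n assume n: "Suc M \<le> n"
    have "prob_at_most F 1 M n \<le> (\<Sum>j\<in>{1..n} - {n}. trans F n 1 n j)"
      unfolding prob_at_most_def using n trans_nonneg by (intro sum_mono2) auto
    also have "\<dots> = 1 - trans F n 1 n n"
      using n sum_trans_row[of n n 1] by (simp add: sum_diff1)
    also have "\<dots> \<le> 1 - exp (- \<Lambda>)"
      using sum_rate_le_total[OF F0 assms(2), of n] by (simp add: trans_diag genQ_def \<Lambda>_def)
    finally show "prob_at_most F 1 M n \<le> 1 - exp (- \<Lambda>)" .
  qed simp
  then have "1 \<le> 1 - exp (- \<Lambda>)"
    using LIMSEQ_le_const2[OF lim_1] by blast
  then show False
    by simp
qed

lemma tail_le_exp_partial_sum: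
  assumes "0 \<le> t" "M < n"
  shows "(\<Sum>j\<in>{M<..n}. trans F n t n j) \<le> exp (- ((\<Sum>k<M. F (Suc k)) * t))"
proof -
  define \<Lambda> where "\<Lambda> = (\<Sum>k<M. F (Suc k))"
  obtain c where "\<Lambda> \<le> c" and exit_le: "\<And>l. l \<in> {1..n} \<Longrightarrow> (\<Sum>j\<in>{1..<l}. rate F l j) \<le> c"
    using exists_uniformization_constant[of \<Lambda> n] by blast
  interpret monotone_lower_stochastic "uniformized F c" n c
    using exit_le by (rule monotone_lower_stochastic_uniformized)
  have "\<Lambda> \<le> (\<Sum>j\<in>{1..M}. uniformized F c l j)" if "l \<in> {M<..n}" for l
  proof -
    have "(\<Sum>j\<in>{1..M}. uniformized F c l j) = (\<Sum>j\<in>{1..M}. rate F l j)"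
      using that by (intro sum.cong) (auto simp: uniformized_def genQ_def)
    then show ?thesis
      using partial_F_le_sum_rate[of M l] that by (simp add: \<Lambda>_def)
  qed
  then have "(\<Sum>j\<in>{M<..n}. matexp (uniformized F c) n t n j) \<le> exp ((c - \<Lambda>) * t)"
    using assms \<open>\<Lambda> \<le> c\<close> by (intro matexp_tail_le_exp) auto
  then have "(\<Sum>j\<in>{M<..n}. trans F n t n j) \<le> exp (- (c * t)) * exp ((c - \<Lambda>) * t)"
    using sum_trans_eq_uniformized[of "{M<..n}" n F t n "\<lambda>_. 1" c] by (simp add: subset_eq)
  also have "\<dots> = exp (- (\<Lambda> * t))"
    by (simp flip: exp_add add: algebra_simps)
  finally show ?thesis
    by (simp add: \<Lambda>_def)
qed

lemma comes_down_if_not_summable: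
  assumes "\<not> summable (\<lambda>k. F (Suc k))"
  shows "comes_down_from_infinity F"
proof (rule comes_down_if_tails_vanish)
  fix t :: real assume t: "0 < t"
  let ?\<delta> = "\<lambda>M. exp (- ((\<Sum>k<M. F (Suc k)) * t))"
  have "filterlim (\<lambda>M. (\<Sum>k<M. F (Suc k)) * t) at_top sequentially"
    using t F_nonneg assms
    by (intro filterlim_at_top_mult_tendsto_pos[OF tendsto_const] filterlim_partial_sums_at_top) auto
  then have "?\<delta> \<longlonglongrightarrow> 0"
    by (intro filterlim_compose[OF exp_at_bot]) (simp add: filterlim_uminus_at_top)
  moreover have "\<forall>n>M. (\<Sum>j\<in>{M<..n}. trans F n t n j) \<le> ?\<delta> M" for M
    using t tail_le_exp_partial_sum by auto
  ultimately show "\<exists>\<delta>. \<delta> \<longlonglongrightarrow> 0 \<and> (\<forall>\<^sub>F M in sequentially. \<forall>n>M. (\<Sum>j\<in>{M<..n}. trans F n t n j) \<le> \<delta> M)"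
    by (intro exI[of _ ?\<delta>]) auto
qed

end

section \<open>The Kingman component\<close>

text \<open>A Lyapunov function for the Kingman coalescent: from \<open>l > M\<close> blocks, the pair merger
  at rate \<open>a * (l choose 2)\<close> decreases it by \<open>2 / (a * l * (l - 1))\<close>, i.e.\ at unit rate.\<close>

definition kingman_potential :: "real \<Rightarrow> nat \<Rightarrow> nat \<Rightarrow> real" where
  "kingman_potential a M j = (if j \<le> M then 0 else 2 / a * (1 / real M - 1 / real j))"

lemma kingman_potential_nonneg:
  assumes "0 < a" "1 \<le> M"
  shows "0 \<le> kingman_potential a M j"
proof (cases "j \<le> M")
  case False
  then have "1 / real j \<le> 1 / real M"
    using assms(2) by (intro divide_left_mono) auto
  then show ?thesis
    using False assms(1) by (simp add: kingman_potential_def)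
qed (simp add: kingman_potential_def)

lemma kingman_potential_mono:
  assumes "0 < a" "1 \<le> M" "j \<le> l"
  shows "kingman_potential a M j \<le> kingman_potential a M l"
proof (cases "j \<le> M")
  case True
  then show ?thesis
    using kingman_potential_nonneg[OF assms(1,2), of l] by (simp add: kingman_potential_def)
next
  case False
  then have "1 / real l \<le> 1 / real j"
    using assms(3) by (intro divide_left_mono) auto
  then have "2 / a * (1 / real M - 1 / real j) \<le> 2 / a * (1 / real M - 1 / real l)"
    using assms(1) by (intro mult_left_mono) auto
  then show ?thesis
    using False assms(3) by (simp add: kingman_potential_def)
qed

lemma kingman_potential_le:
  assumes "0 < a"
  shows "kingman_potential a M j \<le> 2 / (a * real M)"
  using assms by (simp add: kingman_potential_def field_simps)

lemma kingman_potential_Suc_diff: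
  assumes "0 < a" "1 \<le> M" "M \<le> q"
  shows "a * real (Suc q choose 2) * (kingman_potential a M (Suc q) - kingman_potential a M q) = 1"
proof -
  have V: "kingman_potential a M j = 2 / a * (1 / real M - 1 / real j)" if "M \<le> j" for j
    using that by (cases "j = M") (auto simp: kingman_potential_def)
  have diff: "kingman_potential a M (Suc q) - kingman_potential a M q = 2 / a * (1 / real q - 1 / real (Suc q))"
    using assms(3) by (simp add: V algebra_simps)
  have "2 dvd Suc q * q"
    by simp
  then have choose: "real (Suc q choose 2) = real (Suc q) * real q / 2"
    by (simp add: choose_two real_of_nat_div algebra_simps)
  have "0 < real q"
    using assms(2,3) by simp
  have "a * (real (Suc q) * real q / 2) * (2 / a * (1 / real q - 1 / real (Suc q)))
      = real (Suc q) * real q * (1 / real q - 1 / real (Suc q))"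
    using assms(1) by simp
  also have "\<dots> = real (Suc q) - real q"
    using \<open>0 < real q\<close> by (simp add: right_diff_distrib)
  finally show ?thesis
    unfolding diff choose by simp
qed

context coalescent_rates
begin

lemma kingman_drift:
  assumes "0 < F 0" "1 \<le> M" "1 \<le> l"
  shows "(\<Sum>j\<in>{1..<l}. rate F l j * (kingman_potential (F 0) M j - kingman_potential (F 0) M l))
    \<le> - (if M < l then 1 else 0)"
proof (cases "M < l")
  case False
  then show ?thesis
    by (simp add: kingman_potential_def)
next
  case True
  let ?V = "kingman_potential (F 0) M"
  obtain q where l: "l = Suc q" and "M \<le> q"
    using True by (cases l) auto
  have q: "q \<in> {1..<l}"
    using l \<open>M \<le> q\<close> assms(2) by simp
  have "rate F l q * (?V q - ?V l) \<le> F 0 * real (l choose 2) * (?V q - ?V l)"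
    using l kingman_rate_le[of q] kingman_potential_mono[OF assms(1,2), of q l]
    by (intro mult_right_mono_neg) auto
  also have "\<dots> = -1"
    using kingman_potential_Suc_diff[OF assms(1,2) \<open>M \<le> q\<close>] l by (simp add: algebra_simps)
  finally have "rate F l q * (?V q - ?V l) \<le> -1" .
  moreover have "(\<Sum>j\<in>{1..<l} - {q}. rate F l j * (?V j - ?V l)) \<le> 0"
    using kingman_potential_mono[OF assms(1,2)]
    by (intro sum_nonpos mult_nonneg_nonpos rate_nonneg) auto
  moreover have "(\<Sum>j\<in>{1..<l}. rate F l j * (?V j - ?V l))
      = rate F l q * (?V q - ?V l) + (\<Sum>j\<in>{1..<l} - {q}. rate F l j * (?V j - ?V l))"
    by (simp only: sum.remove[OF finite_atLeastLessThan q])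
  ultimately show ?thesis
    using True by simp
qed

lemma tail_le_kingman:
  assumes "0 < F 0" "0 < t" "1 \<le> M" "M < n"
  shows "(\<Sum>j\<in>{M<..n}. trans F n t n j) \<le> 2 / (F 0 * real M * t)"
proof -
  let ?V = "kingman_potential (F 0) M"
  obtain c where "1 \<le> c" and exit_le: "\<And>l. l \<in> {1..n} \<Longrightarrow> (\<Sum>j\<in>{1..<l}. rate F l j) \<le> c"
    using exists_uniformization_constant[of 1 n] by blast
  interpret lower_stochastic "uniformized F c" n c
    using exit_le by (rule lower_stochastic_uniformized)
  have "(\<Sum>j\<in>{1..n}. uniformized F c l j * ?V j) \<le> c * ?V l - (if M < l then 1 else 0)"
    if "l \<in> {1..n}" for l
    using sum_uniformized_row[OF that, of F c ?V] kingman_drift[OF assms(1,3), of l] that by simp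
  then have "(\<Sum>j\<in>{M<..n}. matexp (uniformized F c) n t n j) \<le> ?V n / t * (exp (c * t) - 1)"
    using assms \<open>1 \<le> c\<close> kingman_potential_nonneg[OF assms(1,3)] by (intro matexp_tail_le_lyapunov) auto
  then have "exp (- (c * t)) * (\<Sum>j\<in>{M<..n}. matexp (uniformized F c) n t n j)
      \<le> exp (- (c * t)) * (?V n / t * (exp (c * t) - 1))"
    by (rule mult_left_mono) simp
  moreover have "(\<Sum>j\<in>{M<..n}. trans F n t n j) = exp (- (c * t)) * (\<Sum>j\<in>{M<..n}. matexp (uniformized F c) n t n j)"
    using sum_trans_eq_uniformized[of "{M<..n}" n F t n "\<lambda>_. 1" c] by (simp add: subset_eq)
  ultimately have "(\<Sum>j\<in>{M<..n}. trans F n t n j) \<le> exp (- (c * t)) * (?V n / t * (exp (c * t) - 1))"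
    by simp
  also have "\<dots> = ?V n / t * (1 - exp (- (c * t)))"
    by (simp add: exp_minus field_simps)
  also have "\<dots> \<le> ?V n / t"
  proof -
    have "?V n * (1 - exp (- (c * t))) \<le> ?V n"
      using kingman_potential_nonneg[OF assms(1,3), of n] by (intro mult_left_le) auto
    then show ?thesis
      using assms(2) by (simp add: divide_right_mono)
  qed
  also have "\<dots> \<le> 2 / (F 0 * real M) / t"
    using assms(2) kingman_potential_le[OF assms(1)] by (intro divide_right_mono) auto
  finally show ?thesis
    by simp
qed

lemma comes_down_if_kingman:
  assumes "0 < F 0"
  shows "comes_down_from_infinity F"
proof (rule comes_down_if_tails_vanish)
  fix t :: real assume t: "0 < t"
  let ?\<delta> = "\<lambda>M. 2 / (F 0 * real M * t)"
  have "?\<delta> \<longlonglongrightarrow> 0"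
    using lim_const_over_n[of "2 / (F 0 * t)"] by (simp add: field_simps)
  moreover have "\<forall>\<^sub>F M in sequentially. \<forall>n>M. (\<Sum>j\<in>{M<..n}. trans F n t n j) \<le> ?\<delta> M"
    using eventually_ge_at_top[of 1] by eventually_elim (use assms t tail_le_kingman in auto)
  ultimately show "\<exists>\<delta>. \<delta> \<longlonglongrightarrow> 0 \<and> (\<forall>\<^sub>F M in sequentially. \<forall>n>M. (\<Sum>j\<in>{M<..n}. trans F n t n j) \<le> \<delta> M)"
    by blast
qed

end

theorem mainTheorem4:
  fixes F :: "nat \<Rightarrow> real"
  assumes "\<And>k. F k \<ge> 0"
    and "summable (\<lambda>k. F (Suc k) / real (Suc k))"
  shows "comes_down_from_infinity F \<longleftrightarrow>
           (S_atom F 0 > 0 \<or> \<not> summable (\<lambda>k. real (Suc k) * S_atom F (Suc k)))"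
proof -
  interpret coalescent_rates F
    using assms by unfold_locales
  have "S_atom F 0 = F 0" "(\<lambda>k. real (Suc k) * S_atom F (Suc k)) = (\<lambda>k. F (Suc k))"
    by (simp_all add: S_atom_def)
  moreover have "F 0 = 0" if "\<not> 0 < F 0"
    using that F_nonneg[of 0] by simp
  ultimately show ?thesis
    using not_comes_down_if_summable comes_down_if_kingman comes_down_if_not_summable by auto
qed

end
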